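(* If $\dot G\in\mathcal C_1\cup\mathcal C_4\cup\mathcal C_5$ is a connected, non-complete, $5$-regular and $1$ net-regular SRSG with parameters $(n,5,a,b,c)$, then $(a,b)\neq(-2,1)$ and $(a,b)\neq(-2,-1)$.
   Context: A signed graph $\dot G=(G,\sigma)$ is a simple graph $G$ with $\sigma:E(G)\to\{\pm1\}$; adjacency matrix $A_{\dot G}$ has entries $\sigma(v_iv_j)$ for adjacent vertices and $0$ otherwise. Degree and connectedness refer to $G$; net-degree is $d^+(v)-d^-(v)$; $\rho$ net-regular means all net-degrees equal $\rho$. $\dot G$ on $n$ vertices is an SRSG if it is neither homogeneous complete nor edgeless and there are $r\in\mathbb N$, $a,b,c\in\mathbb Z$ with $(A^2_{\dot G})_{ii}=r$, $(A^2_{\dot G})_{ij}=a$ for positive edges, $b$ for negative edges, $c$ for distinct non-adjacent pairs; parameters $(n,r,a,b,c)$. Classes: $\mathcal C_1$: $a=-b$ and (complete, or non-complete with $c\neq0$); $\mathcal C_4$: $a\ne-b$, non-complete, $c=0$; $\mathcal C_5$: $a\neq-b$, non-complete, $c\notin\{0,\frac{a+b}{2}\}$. *)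

theory Defs
  imports Main
begin

definition signed_graph :: "'v set \<Rightarrow> ('v \<Rightarrow> 'v \<Rightarrow> bool) \<Rightarrow> ('v \<Rightarrow> 'v \<Rightarrow> int) \<Rightarrow> bool" where
  "signed_graph V E \<sigma> \<longleftrightarrow> finite V
     \<and> (\<forall>u v. E u v \<longrightarrow> u \<in> V \<and> v \<in> V \<and> u \<noteq> v)
     \<and> (\<forall>u v. E u v \<longleftrightarrow> E v u)
     \<and> (\<forall>u v. E u v \<longrightarrow> (\<sigma> u v = 1 \<or> \<sigma> u v = -1) \<and> \<sigma> u v = \<sigma> v u)"

definition sadj :: "('v \<Rightarrow> 'v \<Rightarrow> bool) \<Rightarrow> ('v \<Rightarrow> 'v \<Rightarrow> int) \<Rightarrow> 'v \<Rightarrow> 'v \<Rightarrow> int" where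
  "sadj E \<sigma> u v = (if E u v then \<sigma> u v else 0)"

definition sadj2 :: "'v set \<Rightarrow> ('v \<Rightarrow> 'v \<Rightarrow> bool) \<Rightarrow> ('v \<Rightarrow> 'v \<Rightarrow> int) \<Rightarrow> 'v \<Rightarrow> 'v \<Rightarrow> int" where
  "sadj2 V E \<sigma> u v = (\<Sum>w\<in>V. sadj E \<sigma> u w * sadj E \<sigma> w v)"

definition degree :: "'v set \<Rightarrow> ('v \<Rightarrow> 'v \<Rightarrow> bool) \<Rightarrow> 'v \<Rightarrow> nat" where
  "degree V E v = card {w \<in> V. E v w}"

definition pos_degree :: "'v set \<Rightarrow> ('v \<Rightarrow> 'v \<Rightarrow> bool) \<Rightarrow> ('v \<Rightarrow> 'v \<Rightarrow> int) \<Rightarrow> 'v \<Rightarrow> nat" where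
  "pos_degree V E \<sigma> v = card {w \<in> V. E v w \<and> \<sigma> v w = 1}"

definition neg_degree :: "'v set \<Rightarrow> ('v \<Rightarrow> 'v \<Rightarrow> bool) \<Rightarrow> ('v \<Rightarrow> 'v \<Rightarrow> int) \<Rightarrow> 'v \<Rightarrow> nat" where
  "neg_degree V E \<sigma> v = card {w \<in> V. E v w \<and> \<sigma> v w = -1}"

definition regular :: "'v set \<Rightarrow> ('v \<Rightarrow> 'v \<Rightarrow> bool) \<Rightarrow> nat \<Rightarrow> bool" where
  "regular V E r \<longleftrightarrow> (\<forall>v\<in>V. degree V E v = r)"

definition net_regular :: "'v set \<Rightarrow> ('v \<Rightarrow> 'v \<Rightarrow> bool) \<Rightarrow> ('v \<Rightarrow> 'v \<Rightarrow> int) \<Rightarrow> int \<Rightarrow> bool" where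
  "net_regular V E \<sigma> \<rho> \<longleftrightarrow>
     (\<forall>v\<in>V. int (pos_degree V E \<sigma> v) - int (neg_degree V E \<sigma> v) = \<rho>)"

definition complete_graph :: "'v set \<Rightarrow> ('v \<Rightarrow> 'v \<Rightarrow> bool) \<Rightarrow> bool" where
  "complete_graph V E \<longleftrightarrow> (\<forall>u\<in>V. \<forall>v\<in>V. u \<noteq> v \<longrightarrow> E u v)"

definition edgeless :: "('v \<Rightarrow> 'v \<Rightarrow> bool) \<Rightarrow> bool" where
  "edgeless E \<longleftrightarrow> (\<forall>u v. \<not> E u v)"

definition homogeneous :: "('v \<Rightarrow> 'v \<Rightarrow> bool) \<Rightarrow> ('v \<Rightarrow> 'v \<Rightarrow> int) \<Rightarrow> bool" where
  "homogeneous E \<sigma> \<longleftrightarrow> (\<forall>u v. E u v \<longrightarrow> \<sigma> u v = 1) \<or> (\<forall>u v. E u v \<longrightarrow> \<sigma> u v = -1)"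

definition connected_graph :: "'v set \<Rightarrow> ('v \<Rightarrow> 'v \<Rightarrow> bool) \<Rightarrow> bool" where
  "connected_graph V E \<longleftrightarrow> (\<forall>u\<in>V. \<forall>v\<in>V. E\<^sup>*\<^sup>* u v)"

definition srsg :: "'v set \<Rightarrow> ('v \<Rightarrow> 'v \<Rightarrow> bool) \<Rightarrow> ('v \<Rightarrow> 'v \<Rightarrow> int) \<Rightarrow>
    nat \<Rightarrow> nat \<Rightarrow> int \<Rightarrow> int \<Rightarrow> int \<Rightarrow> bool" where
  "srsg V E \<sigma> n r a b c \<longleftrightarrow> signed_graph V E \<sigma>
     \<and> \<not> (complete_graph V E \<and> homogeneous E \<sigma>) \<and> \<not> edgeless E
     \<and> n = card V
     \<and> (\<forall>v\<in>V. sadj2 V E \<sigma> v v = int r)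
     \<and> (\<forall>u\<in>V. \<forall>v\<in>V. E u v \<and> \<sigma> u v = 1 \<longrightarrow> sadj2 V E \<sigma> u v = a)
     \<and> (\<forall>u\<in>V. \<forall>v\<in>V. E u v \<and> \<sigma> u v = -1 \<longrightarrow> sadj2 V E \<sigma> u v = b)
     \<and> (\<forall>u\<in>V. \<forall>v\<in>V. u \<noteq> v \<and> \<not> E u v \<longrightarrow> sadj2 V E \<sigma> u v = c)"

definition class_C1 :: "'v set \<Rightarrow> ('v \<Rightarrow> 'v \<Rightarrow> bool) \<Rightarrow> int \<Rightarrow> int \<Rightarrow> int \<Rightarrow> bool" where
  "class_C1 V E a b c \<longleftrightarrow> a = - b \<and> (complete_graph V E \<or> (\<not> complete_graph V E \<and> c \<noteq> 0))"

definition class_C4 :: "'v set \<Rightarrow> ('v \<Rightarrow> 'v \<Rightarrow> bool) \<Rightarrow> int \<Rightarrow> int \<Rightarrow> int \<Rightarrow> bool" where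
  "class_C4 V E a b c \<longleftrightarrow> a \<noteq> - b \<and> \<not> complete_graph V E \<and> c = 0"

text \<open>c \<notin> {0, (a+b)/2}; the second condition is stated as 2c \<noteq> a+b.\<close>
definition class_C5 :: "'v set \<Rightarrow> ('v \<Rightarrow> 'v \<Rightarrow> bool) \<Rightarrow> int \<Rightarrow> int \<Rightarrow> int \<Rightarrow> bool" where
  "class_C5 V E a b c \<longleftrightarrow> a \<noteq> - b \<and> \<not> complete_graph V E \<and> c \<noteq> 0 \<and> 2 * c \<noteq> a + b"

end

theory Submission
  imports Defs
begin

text \<open>
  Write \<open>A\<close> for the signed and \<open>|A|\<close> for the unsigned adjacency matrix.
  The SRSG condition reads \<open>2A\<^sup>2 = 2cJ + (a - b)A + (a + b - 2c)|A| + 2(r - c)I\<close>,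
  and net-regularity gives \<open>AJ = JA = \<rho>J\<close>. As \<open>A\<close> commutes with \<open>A\<^sup>2\<close>, it commutes
  with \<open>|A|\<close> as soon as \<open>2c \<noteq> a + b\<close>, which holds here because \<open>a + b\<close> is odd.
  For a positive edge \<open>vx\<close>, count the walks \<open>v - w - x\<close> by the signs of their two edges:
  commutation says that the \<open>+-\<close> and \<open>-+\<close> walks are equally many, \<open>A\<^sup>2\<^sub>v\<^sub>x = a = -2\<close>
  is their signed total, and in a 5-regular graph there are at most 4 of them. This forces
  every positive neighbour \<open>x\<close> of \<open>v\<close> to be adjacent to exactly one other positive
  neighbour of \<open>v\<close>. So the 3 positive neighbours of \<open>v\<close> would carry a perfect matching.
\<close>

definition uadj :: "('v \<Rightarrow> 'v \<Rightarrow> bool) \<Rightarrow> 'v \<Rightarrow> 'v \<Rightarrow> int" where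
  "uadj E u v = (if E u v then 1 else 0)"

definition signed_walks2 :: "'v set \<Rightarrow> ('v \<Rightarrow> 'v \<Rightarrow> bool) \<Rightarrow> ('v \<Rightarrow> 'v \<Rightarrow> int) \<Rightarrow>
    int \<Rightarrow> int \<Rightarrow> 'v \<Rightarrow> 'v \<Rightarrow> nat" where
  "signed_walks2 V E \<sigma> s t v x = card {w \<in> V. E v w \<and> \<sigma> v w = s \<and> E w x \<and> \<sigma> w x = t}"

lemma sadj_sadj2_assoc:
  "(\<Sum>w\<in>V. sadj E \<sigma> v w * sadj2 V E \<sigma> w x) = (\<Sum>w\<in>V. sadj2 V E \<sigma> v w * sadj E \<sigma> w x)"
proof -
  have "(\<Sum>w\<in>V. sadj E \<sigma> v w * sadj2 V E \<sigma> w x)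
      = (\<Sum>w\<in>V. \<Sum>u\<in>V. sadj E \<sigma> v w * sadj E \<sigma> w u * sadj E \<sigma> u x)"
    unfolding sadj2_def by (simp add: sum_distrib_left mult.assoc)
  also have "\<dots> = (\<Sum>u\<in>V. \<Sum>w\<in>V. sadj E \<sigma> v w * sadj E \<sigma> w u * sadj E \<sigma> u x)"
    by (rule sum.swap)
  also have "\<dots> = (\<Sum>u\<in>V. sadj2 V E \<sigma> v u * sadj E \<sigma> u x)"
    unfolding sadj2_def by (simp add: sum_distrib_right)
  finally show ?thesis .
qed

lemma even_card_if_one_neighbour:
  assumes "finite P" and sym: "\<And>x y. E x y \<Longrightarrow> E y x" and irrefl: "\<And>x. \<not> E x x"
    and "\<And>x. x \<in> P \<Longrightarrow> card {w \<in> P. E w x} = 1"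
  shows "even (card P)"
  using assms(1,4)
proof (induction P rule: finite_psubset_induct)
  case (psubset P)
  show ?case
  proof (cases "P = {}")
    case False
    then obtain x where x: "x \<in> P" by blast
    obtain y where y: "{w \<in> P. E w x} = {y}"
      by (rule card_1_singletonE[OF psubset.prems[OF x]])
    then have "y \<in> P" "E y x" by auto
    then have "y \<noteq> x" using irrefl by metis
    obtain x' where x': "{w \<in> P. E w y} = {x'}"
      by (rule card_1_singletonE[OF psubset.prems[OF \<open>y \<in> P\<close>]])
    moreover have "x \<in> {w \<in> P. E w y}" using x sym[OF \<open>E y x\<close>] by simp
    ultimately have yx: "{w \<in> P. E w y} = {x}" by simp
    let ?Q = "P - {x, y}"
    have Q_neighbours: "{w \<in> ?Q. E w z} = {w \<in> P. E w z}" if z: "z \<in> ?Q" for z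
    proof -
      have "\<not> E x z"
      proof
        assume "E x z"
        then have "z \<in> {w \<in> P. E w x}" using z sym[of x z] by simp
        with y z show False by simp
      qed
      moreover have "\<not> E y z"
      proof
        assume "E y z"
        then have "z \<in> {w \<in> P. E w y}" using z sym[of y z] by simp
        with yx z show False by simp
      qed
      ultimately show ?thesis by blast
    qed
    have "even (card ?Q)"
    proof (rule psubset.IH)
      show "?Q \<subset> P" using x by blast
      show "card {w \<in> ?Q. E w z} = 1" if "z \<in> ?Q" for z
        using that Q_neighbours psubset.prems by simp
    qed
    moreover have "card ?Q = card P - 2"
      using x \<open>y \<in> P\<close> \<open>y \<noteq> x\<close> psubset.hyps by (simp add: card_Diff_subset)
    moreover have "card {x, y} \<le> card P"
      using x \<open>y \<in> P\<close> psubset.hyps by (intro card_mono) simp_all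
    ultimately show ?thesis using \<open>y \<noteq> x\<close> by auto
  qed simp
qed

context
  fixes V :: "'v set" and E :: "'v \<Rightarrow> 'v \<Rightarrow> bool" and \<sigma> :: "'v \<Rightarrow> 'v \<Rightarrow> int"
  assumes sg: "signed_graph V E \<sigma>"
begin

lemma signed_graph_finite: "finite V"
  using sg unfolding signed_graph_def by blast

lemma signed_graph_edge_in: "E u v \<Longrightarrow> u \<in> V \<and> v \<in> V"
  using sg unfolding signed_graph_def by blast

lemma signed_graph_irrefl: "\<not> E u u"
  using sg unfolding signed_graph_def by blast

lemma signed_graph_sym: "E u v \<longleftrightarrow> E v u"
  using sg unfolding signed_graph_def by blast

lemma signed_graph_sign: "E u v \<Longrightarrow> \<sigma> u v = 1 \<or> \<sigma> u v = -1"
  using sg unfolding signed_graph_def by blast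

lemma signed_graph_sign_sym: "E u v \<Longrightarrow> \<sigma> u v = \<sigma> v u"
  using sg unfolding signed_graph_def by blast

lemma sadj_sym: "sadj E \<sigma> u v = sadj E \<sigma> v u"
  unfolding sadj_def using signed_graph_sym signed_graph_sign_sym by auto

lemma uadj_sym: "uadj E u v = uadj E v u"
  unfolding uadj_def using signed_graph_sym by auto

lemma sadj2_sym: "sadj2 V E \<sigma> u v = sadj2 V E \<sigma> v u"
  unfolding sadj2_def by (simp add: sadj_sym mult.commute)

lemma sum_sadj_eq_net_degree:
  "(\<Sum>w\<in>V. sadj E \<sigma> v w) = int (pos_degree V E \<sigma> v) - int (neg_degree V E \<sigma> v)"
proof -
  have "sadj E \<sigma> v w = of_bool (E v w \<and> \<sigma> v w = 1) - of_bool (E v w \<and> \<sigma> v w = -1)" for w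
    using signed_graph_sign[of v w] unfolding sadj_def by auto
  then have "(\<Sum>w\<in>V. sadj E \<sigma> v w)
      = (\<Sum>w\<in>V. of_bool (E v w \<and> \<sigma> v w = 1)) - (\<Sum>w\<in>V. of_bool (E v w \<and> \<sigma> v w = -1))"
    by (simp add: sum_subtractf)
  then show ?thesis
    using signed_graph_finite unfolding pos_degree_def neg_degree_def by (simp add: Collect_conj_eq)
qed

lemma degree_eq_pos_plus_neg: "degree V E v = pos_degree V E \<sigma> v + neg_degree V E \<sigma> v"
proof -
  have "{w \<in> V. E v w} = {w \<in> V. E v w \<and> \<sigma> v w = 1} \<union> {w \<in> V. E v w \<and> \<sigma> v w = -1}"
    using signed_graph_sign by auto
  then show ?thesis
    unfolding degree_def pos_degree_def neg_degree_def
    using signed_graph_finite by (simp add: card_Un_disjoint disjoint_iff)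
qed

lemma sum_signed_two_walks:
  fixes f g :: "int \<Rightarrow> int"
  shows "(\<Sum>w\<in>V. (if E v w then f (\<sigma> v w) else 0) * (if E w x then g (\<sigma> w x) else 0))
    = f 1 * g 1 * int (signed_walks2 V E \<sigma> 1 1 v x)
    + f 1 * g (-1) * int (signed_walks2 V E \<sigma> 1 (-1) v x)
    + f (-1) * g 1 * int (signed_walks2 V E \<sigma> (-1) 1 v x)
    + f (-1) * g (-1) * int (signed_walks2 V E \<sigma> (-1) (-1) v x)"
proof -
  let ?walk = "\<lambda>s t w. of_bool (E v w \<and> \<sigma> v w = s \<and> E w x \<and> \<sigma> w x = t) :: int"
  have "(if E v w then f (\<sigma> v w) else 0) * (if E w x then g (\<sigma> w x) else 0)
      = f 1 * g 1 * ?walk 1 1 w + f 1 * g (-1) * ?walk 1 (-1) w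
      + f (-1) * g 1 * ?walk (-1) 1 w + f (-1) * g (-1) * ?walk (-1) (-1) w" for w
    using signed_graph_sign[of v w] signed_graph_sign[of w x] by auto
  then show ?thesis
    using signed_graph_finite unfolding signed_walks2_def
    by (simp add: sum.distrib Int_def flip: sum_distrib_left)
qed

lemma card_common_neighbours_le:
  assumes "E v x"
  shows "card {w \<in> V. E v w \<and> E w x} \<le> degree V E v - 1"
proof -
  have "card {w \<in> V. E v w \<and> E w x} \<le> card ({w \<in> V. E v w} - {x})"
    using signed_graph_finite signed_graph_irrefl by (intro card_mono) auto
  also have "\<dots> = degree V E v - 1"
    using assms signed_graph_edge_in signed_graph_finite unfolding degree_def by simp
  finally show ?thesis .
qed

lemma card_common_neighbours_by_signs:
  "card {w \<in> V. E v w \<and> E w x}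
    = signed_walks2 V E \<sigma> 1 1 v x + signed_walks2 V E \<sigma> 1 (-1) v x
      + signed_walks2 V E \<sigma> (-1) 1 v x + signed_walks2 V E \<sigma> (-1) (-1) v x"
proof -
  have "int (card {w \<in> V. E v w \<and> E w x}) = (\<Sum>w\<in>V. of_bool (E v w \<and> E w x))"
    using signed_graph_finite by (simp add: Int_def)
  also have "\<dots> = (\<Sum>w\<in>V. (if E v w then 1 else 0) * (if E w x then 1 else 0))"
    by (intro sum.cong) auto
  finally show ?thesis
    using sum_signed_two_walks[where f = "\<lambda>_. 1" and g = "\<lambda>_. 1"] by simp
qed

lemma card_pos_common_neighbours_by_signs:
  "card {w \<in> V. E v w \<and> \<sigma> v w = 1 \<and> E w x}
    = signed_walks2 V E \<sigma> 1 1 v x + signed_walks2 V E \<sigma> 1 (-1) v x"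
proof -
  have "int (card {w \<in> V. E v w \<and> \<sigma> v w = 1 \<and> E w x})
      = (\<Sum>w\<in>V. of_bool (E v w \<and> \<sigma> v w = 1 \<and> E w x))"
    using signed_graph_finite by (simp add: Int_def)
  also have "\<dots> = (\<Sum>w\<in>V. (if E v w then of_bool (\<sigma> v w = 1) else 0) * (if E w x then 1 else 0))"
    by (intro sum.cong) auto
  finally show ?thesis
    using sum_signed_two_walks[where f = "\<lambda>s. of_bool (s = 1)" and g = "\<lambda>_. 1"] by simp
qed

end

lemma srsg_signed_graph: "srsg V E \<sigma> n r a b c \<Longrightarrow> signed_graph V E \<sigma>"
  unfolding srsg_def by blast

lemma srsg_sadj2_eq:
  assumes srsg: "srsg V E \<sigma> n r a b c" and "u \<in> V" "w \<in> V"
  shows "2 * sadj2 V E \<sigma> u w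
    = 2 * c + (a - b) * sadj E \<sigma> u w + (a + b - 2 * c) * uadj E u w
      + 2 * (int r - c) * of_bool (u = w)"
proof -
  note sg = srsg_signed_graph[OF srsg]
  consider "u = w" | "u \<noteq> w" "E u w" "\<sigma> u w = 1" | "u \<noteq> w" "E u w" "\<sigma> u w = -1"
    | "u \<noteq> w" "\<not> E u w"
    using signed_graph_sign[OF sg] by blast
  then show ?thesis
    using srsg assms signed_graph_irrefl[OF sg] unfolding srsg_def sadj_def uadj_def
    by cases auto
qed

lemma srsg_sadj_times_sadj2:
  assumes srsg: "srsg V E \<sigma> n r a b c" and net: "net_regular V E \<sigma> \<rho>"
    and v: "v \<in> V" and x: "x \<in> V"
  shows "2 * (\<Sum>w\<in>V. sadj E \<sigma> v w * sadj2 V E \<sigma> w x)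
    = 2 * c * \<rho> + (a - b) * sadj2 V E \<sigma> v x
      + (a + b - 2 * c) * (\<Sum>w\<in>V. sadj E \<sigma> v w * uadj E w x)
      + 2 * (int r - c) * sadj E \<sigma> v x"
proof -
  note sg = srsg_signed_graph[OF srsg]
  have row: "(\<Sum>w\<in>V. sadj E \<sigma> v w) = \<rho>"
    using sum_sadj_eq_net_degree[OF sg] net v unfolding net_regular_def by simp
  have "2 * (\<Sum>w\<in>V. sadj E \<sigma> v w * sadj2 V E \<sigma> w x)
      = (\<Sum>w\<in>V. sadj E \<sigma> v w * (2 * sadj2 V E \<sigma> w x))"
    by (simp add: sum_distrib_left ac_simps)
  also have "\<dots> = (\<Sum>w\<in>V. 2 * c * sadj E \<sigma> v w + (a - b) * (sadj E \<sigma> v w * sadj E \<sigma> w x)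
      + (a + b - 2 * c) * (sadj E \<sigma> v w * uadj E w x)
      + 2 * (int r - c) * (sadj E \<sigma> v w * of_bool (w = x)))"
  proof (rule sum.cong)
    fix w assume "w \<in> V"
    show "sadj E \<sigma> v w * (2 * sadj2 V E \<sigma> w x)
      = 2 * c * sadj E \<sigma> v w + (a - b) * (sadj E \<sigma> v w * sadj E \<sigma> w x)
        + (a + b - 2 * c) * (sadj E \<sigma> v w * uadj E w x)
        + 2 * (int r - c) * (sadj E \<sigma> v w * of_bool (w = x))"
      by (subst srsg_sadj2_eq[OF srsg \<open>w \<in> V\<close> x]) (simp add: algebra_simps)
  qed simp
  also have "\<dots> = 2 * c * \<rho> + (a - b) * sadj2 V E \<sigma> v x
      + (a + b - 2 * c) * (\<Sum>w\<in>V. sadj E \<sigma> v w * uadj E w x)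
      + 2 * (int r - c) * sadj E \<sigma> v x"
    using row x signed_graph_finite[OF sg]
    by (simp add: sum.distrib sadj2_def flip: sum_distrib_left)
  finally show ?thesis .
qed

lemma srsg_sadj_uadj_commute:
  assumes srsg: "srsg V E \<sigma> n r a b c" and net: "net_regular V E \<sigma> \<rho>"
    and "2 * c \<noteq> a + b" and v: "v \<in> V" and x: "x \<in> V"
  shows "(\<Sum>w\<in>V. sadj E \<sigma> v w * uadj E w x) = (\<Sum>w\<in>V. uadj E v w * sadj E \<sigma> w x)"
proof -
  note sg = srsg_signed_graph[OF srsg]
  have "(\<Sum>w\<in>V. sadj E \<sigma> v w * sadj2 V E \<sigma> w x) = (\<Sum>w\<in>V. sadj2 V E \<sigma> v w * sadj E \<sigma> w x)"
    by (rule sadj_sadj2_assoc)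
  \<comment> \<open>By symmetry of \<open>A\<close> and \<open>A\<^sup>2\<close>, \<open>(A\<^sup>2A)\<^sub>v\<^sub>x = (AA\<^sup>2)\<^sub>x\<^sub>v\<close>\<close>
  also have "\<dots> = (\<Sum>w\<in>V. sadj E \<sigma> x w * sadj2 V E \<sigma> w v)"
    by (simp add: sadj_sym[OF sg] sadj2_sym[OF sg] mult.commute)
  finally have transpose: "(\<Sum>w\<in>V. sadj E \<sigma> v w * sadj2 V E \<sigma> w x)
      = (\<Sum>w\<in>V. sadj E \<sigma> x w * sadj2 V E \<sigma> w v)" .
  have "2 * (\<Sum>w\<in>V. sadj E \<sigma> x w * sadj2 V E \<sigma> w v)
    = 2 * c * \<rho> + (a - b) * sadj2 V E \<sigma> v x
      + (a + b - 2 * c) * (\<Sum>w\<in>V. sadj E \<sigma> x w * uadj E w v)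
      + 2 * (int r - c) * sadj E \<sigma> v x"
    using srsg_sadj_times_sadj2[OF srsg net x v]
    by (simp only: sadj_sym[OF sg, of x v] sadj2_sym[OF sg, of x v])
  then have "(a + b - 2 * c) * (\<Sum>w\<in>V. sadj E \<sigma> v w * uadj E w x)
      = (a + b - 2 * c) * (\<Sum>w\<in>V. sadj E \<sigma> x w * uadj E w v)"
    using srsg_sadj_times_sadj2[OF srsg net v x] transpose by linarith
  with assms(3) show ?thesis
    by (simp add: sadj_sym[OF sg, of x] uadj_sym[OF sg, of _ v] mult.commute)
qed

lemma srsg_mixed_walks_eq:
  assumes srsg: "srsg V E \<sigma> n r a b c" and net: "net_regular V E \<sigma> \<rho>"
    and "2 * c \<noteq> a + b" and "v \<in> V" "x \<in> V"
  shows "signed_walks2 V E \<sigma> 1 (-1) v x = signed_walks2 V E \<sigma> (-1) 1 v x"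
proof -
  note sg = srsg_signed_graph[OF srsg]
  have "(\<Sum>w\<in>V. sadj E \<sigma> v w * uadj E w x) = (\<Sum>w\<in>V. uadj E v w * sadj E \<sigma> w x)"
    using srsg_sadj_uadj_commute[OF assms] .
  then show ?thesis
    unfolding sadj_def uadj_def
    using sum_signed_two_walks[OF sg, where f = "\<lambda>s. s" and g = "\<lambda>_. 1"]
      sum_signed_two_walks[OF sg, where f = "\<lambda>_. 1" and g = "\<lambda>s. s"]
    by simp
qed

lemma srsg_pos_edge_unique_pos_common_neighbour:
  assumes srsg: "srsg V E \<sigma> n r (-2) b c" and net: "net_regular V E \<sigma> \<rho>"
    and "2 * c \<noteq> b - 2" and "degree V E v \<le> 5" and vx: "E v x" "\<sigma> v x = 1"
  shows "card {w \<in> V. E v w \<and> \<sigma> v w = 1 \<and> E w x} = 1"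
proof -
  note sg = srsg_signed_graph[OF srsg]
  have V: "v \<in> V" "x \<in> V" using signed_graph_edge_in[OF sg vx(1)] by auto
  define walks where "walks s t = int (signed_walks2 V E \<sigma> s t v x)" for s t
  have "sadj2 V E \<sigma> v x = walks 1 1 - walks 1 (-1) - walks (-1) 1 + walks (-1) (-1)"
    unfolding sadj2_def sadj_def walks_def
    using sum_signed_two_walks[OF sg, where f = "\<lambda>s. s" and g = "\<lambda>s. s"] by simp
  moreover have "sadj2 V E \<sigma> v x = -2"
    using srsg V vx unfolding srsg_def by blast
  moreover have "walks 1 (-1) = walks (-1) 1"
    unfolding walks_def using srsg_mixed_walks_eq[OF srsg net _ V] assms(3) by simp
  moreover have "walks 1 1 + walks 1 (-1) + walks (-1) 1 + walks (-1) (-1) \<le> 4"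
    using card_common_neighbours_by_signs[OF sg, of v x] card_common_neighbours_le[OF sg vx(1)]
      assms(4) unfolding walks_def by linarith
  moreover have "walks 1 1 \<ge> 0" "walks (-1) (-1) \<ge> 0"
    unfolding walks_def by simp_all
  moreover have "int (card {w \<in> V. E v w \<and> \<sigma> v w = 1 \<and> E w x}) = walks 1 1 + walks 1 (-1)"
    unfolding card_pos_common_neighbours_by_signs[OF sg] walks_def by simp
  \<comment> \<open>With \<open>p, q, t\<close> the numbers of \<open>++\<close>, \<open>+-\<close>, \<open>--\<close> walks: \<open>p - 2q + t = -2\<close> and
    \<open>p + 2q + t \<le> 4\<close>, so \<open>p + t\<close> is even and at most 1, hence \<open>p = 0\<close> and \<open>q = 1\<close>.\<close>
  ultimately show ?thesis by presburger
qed

theorem lemma3p10: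
  fixes V :: "'v set" and E :: "'v \<Rightarrow> 'v \<Rightarrow> bool" and \<sigma> :: "'v \<Rightarrow> 'v \<Rightarrow> int"
    and n :: nat and a b c :: int
  assumes "srsg V E \<sigma> n 5 a b c"
    and "class_C1 V E a b c \<or> class_C4 V E a b c \<or> class_C5 V E a b c"
    and "connected_graph V E"
    and "\<not> complete_graph V E"
    and "regular V E 5"
    and "net_regular V E \<sigma> 1"
  shows "(a, b) \<noteq> (-2, 1) \<and> (a, b) \<noteq> (-2, -1)"
proof (rule ccontr)
  assume "\<not> ?thesis"
  then have a: "a = -2" and "b = 1 \<or> b = -1" by auto
  then have "2 * c \<noteq> b - 2" by presburger
  have srsg: "srsg V E \<sigma> n 5 (-2) b c" using assms(1) a by simp
  note sg = srsg_signed_graph[OF srsg]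
  obtain v u where "E v u" using srsg unfolding srsg_def edgeless_def by blast
  then have v: "v \<in> V" using signed_graph_edge_in[OF sg] by blast
  have deg: "degree V E v = 5" using assms(5) v unfolding regular_def by blast
  define P where "P = {w \<in> V. E v w \<and> \<sigma> v w = 1}"
  have "int (pos_degree V E \<sigma> v) - int (neg_degree V E \<sigma> v) = 1"
    using assms(6) v unfolding net_regular_def by blast
  then have "card P = 3"
    using degree_eq_pos_plus_neg[OF sg, of v] deg unfolding P_def pos_degree_def by linarith
  moreover have "even (card P)"
  proof (rule even_card_if_one_neighbour)
    show "finite P" unfolding P_def using signed_graph_finite[OF sg] by simp
    show "E y x" if "E x y" for x y using that signed_graph_sym[OF sg] by blast
    show "\<not> E x x" for x by (rule signed_graph_irrefl[OF sg])
    show "card {w \<in> P. E w x} = 1" if "x \<in> P" for x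
      using srsg_pos_edge_unique_pos_common_neighbour[OF srsg assms(6) \<open>2 * c \<noteq> b - 2\<close>]
        deg that unfolding P_def by (simp add: conj_assoc)
  qed
  ultimately show False by simp
qed

end
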